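(* Let $D\subset\mathbb R^d$ be open and connected, $U=\mathbb R^N$, $1\le p<\infty$. Every functional $L_g\in\mathcal C^p(D;U)$ is well-defined and finite on $L^p(D;U)$. Every functional $L_g\in\mathcal C^p_1(D;U)$ is continuous on $L^p(D;U)$ and is Lipschitz continuous on bounded subsets of $L^p(D;U)$.
   Context: A Carathéodory function $g:D^k\times U^k\to\mathbb R$ is measurable, continuous in $\xi$ for a.e. $x$, measurable in $x$ for every $\xi$. For $\alpha\in\{0,1\}^k$: $\bar\alpha=\mathbb 1-\alpha$, $x_{\bar\alpha}$ the subvector of entries of $x$ with $\bar\alpha_i=1$, $|\xi^\alpha|=\prod_{i:\alpha_i=1}|\xi_i|$; $\hat x^i$ is $x$ with $i$-th entry removed. $\mathcal H^{k,p}(D;U)$: Carathéodory $g$ with $|g(x,\xi)|\le\sum_{\alpha\in\{0,1\}^k}\phi_{|\bar\alpha|}(x_{\bar\alpha})|\xi^\alpha|^p$ for nonnegative $\phi_i\in L^1(D^i)$, $i=0,\dots,k$ ($L^1(D^0)\cong\mathbb R$). $\mathcal H^{k,p}_1(D;U)$: those $g$ for which there are $r>0$ and nonnegative $h\in\mathcal H^{k-1,p}(D;U)$ with $|g(x,\zeta)-g(y,\xi)|\le\sum_{i=1}^k|\zeta_i-\xi_i|\max(|\xi_i|,|\zeta_i|)^{p-1}h(\hat x^i,\hat\xi^i)$ for all $x\in D^k$, $y\in B_r(x)$, $\xi,\zeta\in U^k$. $L_g(u):=\int_{D^k}g(x_1,\dots,x_k,u(x_1),\dots,u(x_k))dx$.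 $\mathcal C^p(D;U)=\{L_g:g\in\mathcal H^{k,p},k\in\mathbb N\}$, $\mathcal C^p_1(D;U)=\{L_g:g\in\mathcal H^{k,p}_1,k\in\mathbb N\}$. *)

theory Defs
  imports "HOL-Analysis.Analysis"
begin

text \<open>Points of D^k (resp. U^k) are represented as extensional functions
  nat => 'a on the index set {..<k}, i.e. elements of PiE {..<k} (%_. D).\<close>

definition DK :: "'a::euclidean_space set \<Rightarrow> nat \<Rightarrow> (nat \<Rightarrow> 'a) measure" where
  "DK D k = completion (PiM {..<k} (\<lambda>_. lebesgue_on D))"

definition subvec :: "(nat \<Rightarrow> 'c) \<Rightarrow> nat set \<Rightarrow> (nat \<Rightarrow> 'c)" where
  "subvec x S = (\<lambda>i. if i < card S then x (sorted_list_of_set S ! i) else undefined)"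

definition caratheodory ::
  "'a::euclidean_space set \<Rightarrow> nat \<Rightarrow> ((nat \<Rightarrow> 'a) \<Rightarrow> (nat \<Rightarrow> 'b::euclidean_space) \<Rightarrow> real) \<Rightarrow> bool" where
  "caratheodory D k g \<longleftrightarrow>
     (\<lambda>(x, \<xi>). g x \<xi>) \<in> borel_measurable (DK D k \<Otimes>\<^sub>M PiM {..<k} (\<lambda>_. borel)) \<and>
     (AE x in DK D k. continuous_on (PiE {..<k} (\<lambda>_. UNIV)) (g x)) \<and>
     (\<forall>\<xi> \<in> PiE {..<k} (\<lambda>_. UNIV). (\<lambda>x. g x \<xi>) \<in> borel_measurable (DK D k))"

text \<open>The class H^{k,p}(D;U). A multi-index alpha in {0,1}^k is encoded by the set
  A = {i. alpha_i = 1}; its complement {..<k} - A corresponds to alpha-bar.\<close>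
definition Hkp ::
  "'a::euclidean_space set \<Rightarrow> nat \<Rightarrow> real \<Rightarrow> ((nat \<Rightarrow> 'a) \<Rightarrow> (nat \<Rightarrow> 'b::euclidean_space) \<Rightarrow> real) \<Rightarrow> bool" where
  "Hkp D k p g \<longleftrightarrow> caratheodory D k g \<and>
     (\<exists>\<phi> :: nat \<Rightarrow> (nat \<Rightarrow> 'a) \<Rightarrow> real.
        (\<forall>j\<le>k. (\<forall>x. 0 \<le> \<phi> j x) \<and> integrable (DK D j) (\<phi> j)) \<and>
        (\<forall>x \<in> PiE {..<k} (\<lambda>_. D). \<forall>\<xi> \<in> PiE {..<k} (\<lambda>_. UNIV).
           \<bar>g x \<xi>\<bar> \<le> (\<Sum>A\<in>Pow {..<k}.
               \<phi> (card ({..<k} - A)) (subvec x ({..<k} - A)) * (\<Prod>i\<in>A. norm (\<xi> i)) powr p)))"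

text \<open>The class H^{k,p}_1(D;U) (a subclass of H^{k,p}); the ball B_r(x) is taken in D^k
  with the Euclidean norm of R^{dk}.\<close>
definition Hkp1 ::
  "'a::euclidean_space set \<Rightarrow> nat \<Rightarrow> real \<Rightarrow> ((nat \<Rightarrow> 'a) \<Rightarrow> (nat \<Rightarrow> 'b::euclidean_space) \<Rightarrow> real) \<Rightarrow> bool" where
  "Hkp1 D k p g \<longleftrightarrow> Hkp D k p g \<and>
     (\<exists>r>0. \<exists>h :: (nat \<Rightarrow> 'a) \<Rightarrow> (nat \<Rightarrow> 'b) \<Rightarrow> real.
        Hkp D (k - 1) p h \<and> (\<forall>x \<xi>. 0 \<le> h x \<xi>) \<and>
        (\<forall>x \<in> PiE {..<k} (\<lambda>_. D). \<forall>y \<in> PiE {..<k} (\<lambda>_. D).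
           (\<Sum>i<k. (norm (x i - y i))\<^sup>2) < r\<^sup>2 \<longrightarrow>
           (\<forall>\<xi> \<in> PiE {..<k} (\<lambda>_. UNIV). \<forall>\<zeta> \<in> PiE {..<k} (\<lambda>_. UNIV).
              \<bar>g x \<zeta> - g y \<xi>\<bar> \<le> (\<Sum>i<k. norm (\<zeta> i - \<xi> i) * (max (norm (\<xi> i)) (norm (\<zeta> i))) powr (p - 1)
                    * h (subvec x ({..<k} - {i})) (subvec \<xi> ({..<k} - {i}))))))"

definition Lg :: "'a::euclidean_space set \<Rightarrow> nat \<Rightarrow> ((nat \<Rightarrow> 'a) \<Rightarrow> (nat \<Rightarrow> 'b) \<Rightarrow> real)
    \<Rightarrow> ('a \<Rightarrow> 'b) \<Rightarrow> real" where
  "Lg D k g u = (\<integral>x. g x (\<lambda>i\<in>{..<k}. u (x i)) \<partial>DK D k)"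

definition in_Lp :: "'a::euclidean_space set \<Rightarrow> real \<Rightarrow> ('a \<Rightarrow> 'b::euclidean_space) \<Rightarrow> bool" where
  "in_Lp D p u \<longleftrightarrow> u \<in> borel_measurable (lebesgue_on D) \<and>
     integrable (lebesgue_on D) (\<lambda>x. norm (u x) powr p)"

definition Lp_norm :: "'a::euclidean_space set \<Rightarrow> real \<Rightarrow> ('a \<Rightarrow> 'b::euclidean_space) \<Rightarrow> real" where
  "Lp_norm D p u = (\<integral>x. norm (u x) powr p \<partial>lebesgue_on D) powr (1 / p)"

end

(*
  Write u(x) = (u(x_1), ..., u(x_k)). The growth condition bounds |g(x, u(x))| by a sum
  over A of phi(x restricted to the complement of A) times the product of |u(x_i)|^p over
  i in A. Each term is a product of functions of disjoint groups of variables, so Tonelli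
  on the product measure bounds the integral of |g(x, u(x))| by a polynomial in
  ||u||_p^p; hence L_g is finite. Tonelli is applied to the uncompleted product measure,
  with Borel majorants of the weights phi, which are integrable only for its completion.

  For g in H_1, the Lipschitz condition with y = x bounds |g(x, u(x)) - g(x, v(x))| by
  the sum over i of |u - v|(x_i) max(|u|, |v|)^(p-1)(x_i) h(x', v(x')), x' being x
  without x_i. Tonelli separates the variable x_i, Hoelder bounds its integral by
  ||u - v||_p (||u||_p^p + ||v||_p^p)^((p-1)/p), and the growth bound for h controls the
  remaining factor. This gives Lipschitz continuity on bounded sets, and continuity
  follows because ||v||_p^p <= 2^p (||u||_p^p + ||u - v||_p^p).
*)

theory Submission
  imports Defs
begin

lemma sorted_list_of_set_nth_mem: "finite S \<Longrightarrow> j < card S \<Longrightarrow> sorted_list_of_set S ! j \<in> S"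
  by (metis length_sorted_list_of_set nth_mem set_sorted_list_of_set)

lemma bij_betw_sorted_list_of_set_nth:
  "finite S \<Longrightarrow> bij_betw (\<lambda>j. sorted_list_of_set S ! j) {..<card S} S"
  by (rule bij_betw_nth) auto

lemma subvec_eq_restrict: "subvec x S = (\<lambda>j\<in>{..<card S}. x (sorted_list_of_set S ! j))"
  by (auto simp: subvec_def)

lemma subvec_in_PiE:
  assumes "finite S" "S \<subseteq> I" "x \<in> PiE I (\<lambda>_. B)"
  shows "subvec x S \<in> PiE {..<card S} (\<lambda>_. B)"
  unfolding subvec_eq_restrict
proof (rule restrict_PiE_iff[THEN iffD2], intro ballI)
  fix j assume "j \<in> {..<card S}"
  then have "sorted_list_of_set S ! j \<in> I"
    using assms(1,2) sorted_list_of_set_nth_mem by auto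
  then show "x (sorted_list_of_set S ! j) \<in> B"
    using assms(3) by auto
qed

lemma subvec_restrict_comp:
  assumes "finite S" "S \<subseteq> I"
  shows "subvec (\<lambda>i\<in>I. u (x i)) S = (\<lambda>j\<in>{..<card S}. u (subvec x S j))"
proof -
  have "sorted_list_of_set S ! j \<in> I" if "j < card S" for j
    using assms sorted_list_of_set_nth_mem that by auto
  then show ?thesis
    by (auto simp: subvec_eq_restrict)
qed

lemma measurable_subvec [measurable]:
  assumes "finite S" "S \<subseteq> I"
  shows "(\<lambda>x. subvec x S) \<in> PiM I (\<lambda>_. N) \<rightarrow>\<^sub>M PiM {..<card S} (\<lambda>_. N)"
  unfolding subvec_eq_restrict
  by (intro measurable_restrict measurable_component_singleton)
     (use assms sorted_list_of_set_nth_mem in auto)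

lemma vimage_subvec_PiE:
  assumes S: "finite S" and A: "\<And>j. j < card S \<Longrightarrow> A j \<subseteq> space N"
  defines "\<tau> \<equiv> the_inv_into {..<card S} (\<lambda>j. sorted_list_of_set S ! j)"
  shows "(\<lambda>x. subvec x S) -` PiE {..<card S} A \<inter> space (PiM S (\<lambda>_. N)) = PiE S (\<lambda>i. A (\<tau> i))"
proof -
  define \<sigma> where "\<sigma> j = sorted_list_of_set S ! j" for j
  have \<sigma>: "bij_betw \<sigma> {..<card S} S"
    using bij_betw_sorted_list_of_set_nth[OF S] by (simp add: \<sigma>_def[abs_def])
  then have \<tau>: "bij_betw \<tau> S {..<card S}"
    unfolding \<tau>_def \<sigma>_def[symmetric] by (rule bij_betw_the_inv_into)
  have \<sigma>\<tau>: "i \<in> S \<Longrightarrow> \<sigma> (\<tau> i) = i" and \<tau>\<sigma>: "j < card S \<Longrightarrow> \<tau> (\<sigma> j) = j" for i j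
    using \<sigma> by (auto simp: \<tau>_def \<sigma>_def[symmetric] bij_betw_def f_the_inv_into_f the_inv_into_f_f)
  show ?thesis
  proof (intro set_eqI iffI)
    fix x assume x: "x \<in> (\<lambda>x. subvec x S) -` PiE {..<card S} A \<inter> space (PiM S (\<lambda>_. N))"
    show "x \<in> PiE S (\<lambda>i. A (\<tau> i))"
    proof (rule PiE_I)
      fix i assume "i \<in> S"
      then have "\<tau> i < card S" "\<sigma> (\<tau> i) = i"
        using \<tau> \<sigma>\<tau> by (auto simp: bij_betw_def)
      then show "x i \<in> A (\<tau> i)"
        using x by (force simp: PiE_iff subvec_def \<sigma>_def)
    qed (use x in \<open>auto simp: space_PiM PiE_iff extensional_def\<close>)
  next
    fix x assume x: "x \<in> PiE S (\<lambda>i. A (\<tau> i))"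
    have "A (\<tau> i) \<subseteq> space N" if "i \<in> S" for i
      using that \<tau> by (intro A) (auto simp: bij_betw_def)
    then have "x \<in> space (PiM S (\<lambda>_. N))"
      using x by (auto simp: space_PiM PiE_iff)
    moreover have "subvec x S \<in> PiE {..<card S} A"
    proof (rule PiE_I)
      fix j assume j: "j \<in> {..<card S}"
      then have "\<sigma> j \<in> S"
        using \<sigma> by (auto simp: bij_betw_def)
      then show "subvec x S j \<in> A j"
        using x j \<tau>\<sigma> by (auto simp: PiE_iff subvec_def \<sigma>_def)
    qed (simp add: subvec_def)
    ultimately show "x \<in> (\<lambda>x. subvec x S) -` PiE {..<card S} A \<inter> space (PiM S (\<lambda>_. N))"
      by simp
  qed
qed

lemma distr_subvec_PiM:
  assumes "sigma_finite_measure N" and S: "finite S"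
  shows "distr (PiM S (\<lambda>_. N)) (PiM {..<card S} (\<lambda>_. N)) (\<lambda>x. subvec x S) = PiM {..<card S} (\<lambda>_. N)"
proof -
  interpret product_sigma_finite "\<lambda>_. N"
    by (simp add: product_sigma_finite_def assms)
  define \<tau> where "\<tau> = the_inv_into {..<card S} (\<lambda>j. sorted_list_of_set S ! j)"
  have \<tau>: "bij_betw \<tau> S {..<card S}"
    unfolding \<tau>_def using bij_betw_sorted_list_of_set_nth[OF S] by (rule bij_betw_the_inv_into)
  show ?thesis
  proof (rule PiM_eqI)
    fix A assume A: "\<And>j. j \<in> {..<card S} \<Longrightarrow> A j \<in> sets N"
    have "(\<lambda>x. subvec x S) -` PiE {..<card S} A \<inter> space (PiM S (\<lambda>_. N)) = PiE S (\<lambda>i. A (\<tau> i))"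
      unfolding \<tau>_def by (rule vimage_subvec_PiE[OF S]) (use A sets.sets_into_space in auto)
    then have "emeasure (distr (PiM S (\<lambda>_. N)) (PiM {..<card S} (\<lambda>_. N)) (\<lambda>x. subvec x S)) (PiE {..<card S} A)
        = emeasure (PiM S (\<lambda>_. N)) (PiE S (\<lambda>i. A (\<tau> i)))"
      using A S by (simp add: emeasure_distr sets_PiM_I_finite)
    also have "\<dots> = (\<Prod>i\<in>S. emeasure N (A (\<tau> i)))"
      using A S \<tau> by (intro emeasure_PiM) (auto simp: bij_betw_def)
    also have "\<dots> = (\<Prod>j<card S. emeasure N (A j))"
      using prod.reindex_bij_betw[OF \<tau>, of "\<lambda>j. emeasure N (A j)"] by simp
    finally show "emeasure (distr (PiM S (\<lambda>_. N)) (PiM {..<card S} (\<lambda>_. N)) (\<lambda>x. subvec x S)) (PiE {..<card S} A)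
        = (\<Prod>j<card S. emeasure N (A j))" .
  qed (use S in auto)
qed

lemma nn_integral_subvec:
  assumes "sigma_finite_measure N" "finite S"
    and f: "f \<in> borel_measurable (PiM {..<card S} (\<lambda>_. N))"
  shows "(\<integral>\<^sup>+x. f (subvec x S) \<partial>PiM S (\<lambda>_. N)) = (\<integral>\<^sup>+y. f y \<partial>PiM {..<card S} (\<lambda>_. N))"
proof -
  have "(\<integral>\<^sup>+x. f (subvec x S) \<partial>PiM S (\<lambda>_. N))
      = (\<integral>\<^sup>+y. f y \<partial>distr (PiM S (\<lambda>_. N)) (PiM {..<card S} (\<lambda>_. N)) (\<lambda>x. subvec x S))"
    by (rule nn_integral_distr[symmetric]) (use assms in auto)
  then show ?thesis
    by (simp add: distr_subvec_PiM assms)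
qed

lemma nn_integral_PiM_subvec_mult:
  fixes N :: "'x measure"
  assumes "sigma_finite_measure N" "finite I" "S \<subseteq> I"
    and f: "f \<in> borel_measurable (PiM {..<card S} (\<lambda>_. N))"
    and h: "h \<in> borel_measurable (PiM {..<card (I - S)} (\<lambda>_. N))"
  shows "(\<integral>\<^sup>+x. f (subvec x S) * h (subvec x (I - S)) \<partial>PiM I (\<lambda>_. N))
        = (\<integral>\<^sup>+y. f y \<partial>PiM {..<card S} (\<lambda>_. N)) * (\<integral>\<^sup>+y. h y \<partial>PiM {..<card (I - S)} (\<lambda>_. N))"
proof -
  interpret product_sigma_finite "\<lambda>_. N"
    by (simp add: product_sigma_finite_def assms)
  define T where "T = I - S"
  have S: "finite S" and T: "finite T" and disj: "S \<inter> T = {}"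
    using assms(2,3) finite_subset by (auto simp: T_def)
  have [measurable]: "f \<in> borel_measurable (PiM {..<card S} (\<lambda>_. N))"
    "h \<in> borel_measurable (PiM {..<card T} (\<lambda>_. N))"
    using f h by (simp_all add: T_def)
  have [measurable]: "(\<lambda>x. subvec x S) \<in> PiM (S \<union> T) (\<lambda>_. N) \<rightarrow>\<^sub>M PiM {..<card S} (\<lambda>_. N)"
    "(\<lambda>x. subvec x T) \<in> PiM (S \<union> T) (\<lambda>_. N) \<rightarrow>\<^sub>M PiM {..<card T} (\<lambda>_. N)"
    using S T by (auto intro: measurable_subvec)
  have merge_S: "subvec (merge S T (x, y)) S = subvec x S" for x y :: "nat \<Rightarrow> 'x"
    using sorted_list_of_set_nth_mem[OF S] by (auto simp: subvec_def merge_def)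
  have merge_T: "subvec (merge S T (x, y)) T = subvec y T" for x y :: "nat \<Rightarrow> 'x"
    using sorted_list_of_set_nth_mem[OF T] disj by (fastforce simp: subvec_def merge_def)
  have "(\<integral>\<^sup>+x. f (subvec x S) * h (subvec x T) \<partial>PiM (S \<union> T) (\<lambda>_. N))
      = (\<integral>\<^sup>+x. (\<integral>\<^sup>+y. f (subvec x S) * h (subvec y T) \<partial>PiM T (\<lambda>_. N)) \<partial>PiM S (\<lambda>_. N))"
    using product_nn_integral_fold[OF disj S T, of "\<lambda>x. f (subvec x S) * h (subvec x T)"]
    by (simp add: merge_S merge_T)
  also have "\<dots> = (\<integral>\<^sup>+x. f (subvec x S) * (\<integral>\<^sup>+y. h (subvec y T) \<partial>PiM T (\<lambda>_. N)) \<partial>PiM S (\<lambda>_. N))"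
    by (intro nn_integral_cong nn_integral_cmult) (use T in auto)
  also have "\<dots> = (\<integral>\<^sup>+x. f (subvec x S) \<partial>PiM S (\<lambda>_. N)) * (\<integral>\<^sup>+y. h (subvec y T) \<partial>PiM T (\<lambda>_. N))"
    by (rule nn_integral_multc) (use S in auto)
  also have "\<dots> = (\<integral>\<^sup>+y. f y \<partial>PiM {..<card S} (\<lambda>_. N)) * (\<integral>\<^sup>+y. h y \<partial>PiM {..<card T} (\<lambda>_. N))"
    by (simp add: nn_integral_subvec assms S T)
  finally show ?thesis
    using assms(3) by (simp add: T_def Un_absorb1)
qed

lemma nn_integral_PiM_prod_components:
  assumes "sigma_finite_measure N" "w \<in> borel_measurable N"
  shows "(\<integral>\<^sup>+y. (\<Prod>j<n. w (y j)) \<partial>PiM {..<n} (\<lambda>_. N)) = (\<integral>\<^sup>+t. w t \<partial>N) ^ n"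
proof -
  interpret product_sigma_finite "\<lambda>_. N"
    by (simp add: product_sigma_finite_def assms)
  show ?thesis
    using assms by (subst product_nn_integral_prod) auto
qed

lemma measurable_subvec_mult_prod:
  fixes \<psi> :: "(nat \<Rightarrow> 'x) \<Rightarrow> ennreal" and w :: "'x \<Rightarrow> ennreal"
  assumes "finite I" "A \<subseteq> I"
    and \<psi>: "\<psi> \<in> borel_measurable (PiM {..<card (I - A)} (\<lambda>_. N))" and w: "w \<in> borel_measurable N"
  shows "(\<lambda>x. \<psi> (subvec x (I - A)) * (\<Prod>i\<in>A. w (x i))) \<in> borel_measurable (PiM I (\<lambda>_. N))"
proof (intro borel_measurable_times_ennreal borel_measurable_prod_ennreal)
  show "(\<lambda>x. \<psi> (subvec x (I - A))) \<in> borel_measurable (PiM I (\<lambda>_. N))"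
    using assms by (intro measurable_compose[OF measurable_subvec \<psi>]) auto
  show "(\<lambda>x. w (x i)) \<in> borel_measurable (PiM I (\<lambda>_. N))" if "i \<in> A" for i
    using that assms by (intro measurable_compose[OF measurable_component_singleton[of i] w]) auto
qed

lemma nn_integral_PiM_subvec_prod:
  assumes N: "sigma_finite_measure N" and I: "finite I" "A \<subseteq> I"
    and \<psi>: "\<psi> \<in> borel_measurable (PiM {..<card (I - A)} (\<lambda>_. N))" and w: "w \<in> borel_measurable N"
  shows "(\<integral>\<^sup>+x. \<psi> (subvec x (I - A)) * (\<Prod>i\<in>A. w (x i)) \<partial>PiM I (\<lambda>_. N))
    = (\<integral>\<^sup>+y. \<psi> y \<partial>PiM {..<card (I - A)} (\<lambda>_. N)) * (\<integral>\<^sup>+t. w t \<partial>N) ^ card A"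
proof -
  define W where "W y = (\<Prod>j<card A. w (y j))" for y
  have A: "finite A"
    using I finite_subset by blast
  have "(\<Prod>i\<in>A. w (x i)) = W (subvec x A)" for x
    using prod.reindex_bij_betw[OF bij_betw_sorted_list_of_set_nth[OF A], of "\<lambda>i. w (x i)"]
    by (simp add: W_def subvec_def)
  moreover have "W \<in> borel_measurable (PiM {..<card A} (\<lambda>_. N))"
    unfolding W_def using w by measurable
  ultimately have "(\<integral>\<^sup>+x. \<psi> (subvec x (I - A)) * (\<Prod>i\<in>A. w (x i)) \<partial>PiM I (\<lambda>_. N))
      = (\<integral>\<^sup>+y. W y \<partial>PiM {..<card A} (\<lambda>_. N)) * (\<integral>\<^sup>+y. \<psi> y \<partial>PiM {..<card (I - A)} (\<lambda>_. N))"
    using nn_integral_PiM_subvec_mult[OF N I _ \<psi>, of W] by (simp add: mult.commute)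
  then show ?thesis
    by (simp add: W_def nn_integral_PiM_prod_components[OF N w] mult.commute)
qed

lemma nn_integral_PiM_sum_component_mult:
  assumes N: "sigma_finite_measure N" and a: "a \<in> borel_measurable N"
    and H: "H \<in> borel_measurable (PiM {..<k - 1} (\<lambda>_. N))"
  shows "(\<integral>\<^sup>+x. (\<Sum>i<k. a (x i) * H (subvec x ({..<k} - {i}))) \<partial>PiM {..<k} (\<lambda>_. N))
    = of_nat k * ((\<integral>\<^sup>+t. a t \<partial>N) * (\<integral>\<^sup>+y. H y \<partial>PiM {..<k - 1} (\<lambda>_. N)))"
proof -
  have meas: "(\<lambda>x. a (x i) * H (subvec x ({..<k} - {i}))) \<in> borel_measurable (PiM {..<k} (\<lambda>_. N))"
    and int: "(\<integral>\<^sup>+x. a (x i) * H (subvec x ({..<k} - {i})) \<partial>PiM {..<k} (\<lambda>_. N))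
      = (\<integral>\<^sup>+t. a t \<partial>N) * (\<integral>\<^sup>+y. H y \<partial>PiM {..<k - 1} (\<lambda>_. N))"
    if i: "i \<in> {..<k}" for i
  proof -
    have "(\<lambda>x. subvec x ({..<k} - {i})) \<in> PiM {..<k} (\<lambda>_. N) \<rightarrow>\<^sub>M PiM {..<card ({..<k} - {i})} (\<lambda>_. N)"
      by (intro measurable_subvec) auto
    moreover have "card ({..<k} - {i}) = k - 1"
      using i by simp
    ultimately have [measurable]:
      "(\<lambda>x. subvec x ({..<k} - {i})) \<in> PiM {..<k} (\<lambda>_. N) \<rightarrow>\<^sub>M PiM {..<k - 1} (\<lambda>_. N)"
      by simp
    have [measurable]: "(\<lambda>x. a (x i)) \<in> borel_measurable (PiM {..<k} (\<lambda>_. N))"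
      using i by (intro measurable_compose[OF measurable_component_singleton[of i] a])
    show "(\<lambda>x. a (x i) * H (subvec x ({..<k} - {i}))) \<in> borel_measurable (PiM {..<k} (\<lambda>_. N))"
      using H by measurable
    show "(\<integral>\<^sup>+x. a (x i) * H (subvec x ({..<k} - {i})) \<partial>PiM {..<k} (\<lambda>_. N))
      = (\<integral>\<^sup>+t. a t \<partial>N) * (\<integral>\<^sup>+y. H y \<partial>PiM {..<k - 1} (\<lambda>_. N))"
      using nn_integral_PiM_subvec_prod[OF N _ _ _ a, of "{..<k}" "{i}" H] i H
      by (simp add: mult.commute)
  qed
  have "(\<integral>\<^sup>+x. (\<Sum>i<k. a (x i) * H (subvec x ({..<k} - {i}))) \<partial>PiM {..<k} (\<lambda>_. N))
      = (\<Sum>i<k. (\<integral>\<^sup>+x. a (x i) * H (subvec x ({..<k} - {i})) \<partial>PiM {..<k} (\<lambda>_. N)))"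
    using meas by (intro nn_integral_sum) auto
  then show ?thesis
    by (simp add: int)
qed

lemma sigma_finite_lebesgue_on:
  assumes "D \<in> sets lebesgue"
  shows "sigma_finite_measure (lebesgue_on D)"
proof (rule sigma_finite_measure_restrict_space[OF _ assms])
  obtain A :: "'a set set" where "countable A" "A \<subseteq> sets lborel" "\<Union>A = space lborel"
    "\<forall>a\<in>A. emeasure lborel a \<noteq> \<infinity>"
    using lborel.sigma_finite_countable by blast
  then show "sigma_finite_measure (lebesgue :: 'a measure)"
    by unfold_locales (intro exI[of _ A]; auto)
qed

lemma completion_integrable_borel_majorant:
  fixes f :: "'x \<Rightarrow> real"
  assumes f: "integrable (completion N) f" and nonneg: "\<And>x. 0 \<le> f x"
  obtains \<psi> where "\<psi> \<in> borel_measurable N" "\<And>x. x \<in> space N \<Longrightarrow> ennreal (f x) \<le> \<psi> x"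
    "(\<integral>\<^sup>+x. \<psi> x \<partial>N) = ennreal (integral\<^sup>L (completion N) f)"
proof -
  obtain f' where [measurable]: "f' \<in> borel_measurable N" and "AE x in N. f x = f' x"
    using completion_ex_borel_measurable_real[OF borel_measurable_integrable[OF f]] by blast
  then obtain Z where Z: "Z \<in> null_sets N" "{x\<in>space N. f x \<noteq> f' x} \<subseteq> Z"
    by (auto elim!: AE_E)
  then have [measurable]: "Z \<in> sets N"
    by auto
  define \<psi> where "\<psi> x = (if x \<in> Z then \<infinity> else ennreal (f' x))" for x
  have "AE x in N. \<psi> x = ennreal (f x)"
    using AE_not_in[OF Z(1)] AE_space by eventually_elim (use Z(2) in \<open>auto simp: \<psi>_def\<close>)
  then have "(\<integral>\<^sup>+x. \<psi> x \<partial>N) = (\<integral>\<^sup>+x. ennreal (f x) \<partial>N)"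
    by (rule nn_integral_cong_AE)
  also have "\<dots> = (\<integral>\<^sup>+x. ennreal (f x) \<partial>completion N)"
    by (simp add: nn_integral_completion)
  also have "\<dots> = ennreal (integral\<^sup>L (completion N) f)"
    using f nonneg by (simp add: nn_integral_eq_integral)
  finally have "(\<integral>\<^sup>+x. \<psi> x \<partial>N) = ennreal (integral\<^sup>L (completion N) f)" .
  moreover have "\<psi> \<in> borel_measurable N"
    unfolding \<psi>_def by measurable
  ultimately show ?thesis
    using Z by (intro that[of \<psi>]) (auto simp: \<psi>_def)
qed

lemma max_powr_le_add:
  fixes a b p :: real
  assumes "0 \<le> a" "0 \<le> b" "0 \<le> p"
  shows "max a b powr p \<le> a powr p + b powr p"
  using assms by (cases "a \<le> b") (auto simp: max_def)

lemma norm_diff_powr_le: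
  fixes x y :: "'b::real_normed_vector"
  assumes "0 \<le> p"
  shows "norm (x - y) powr p \<le> 2 powr p * (norm x powr p + norm y powr p)"
proof -
  have "norm (x - y) powr p \<le> (2 * max (norm x) (norm y)) powr p"
    using norm_triangle_ineq4[of x y] assms by (intro powr_mono2) auto
  also have "\<dots> \<le> 2 powr p * (norm x powr p + norm y powr p)"
    using assms by (simp add: powr_mult max_powr_le_add)
  finally show ?thesis .
qed

lemma weighted_AM_GM:
  fixes a b \<alpha> \<beta> :: real
  assumes "0 \<le> a" "0 \<le> b" "0 \<le> \<alpha>" "0 \<le> \<beta>" "\<alpha> + \<beta> = 1"
  shows "a powr \<alpha> * b powr \<beta> \<le> \<alpha> * a + \<beta> * b"
  using Youngs_inequality_0[OF assms(3-5)] assms by (cases "a = 0 \<or> b = 0") auto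

lemma scaled_Young_inequality:
  fixes a b p X Y :: real
  assumes "1 \<le> p" "0 \<le> a" "0 \<le> b" "0 < X" "0 < Y"
  shows "a * b powr (p - 1) \<le> X powr (1/p) * Y powr ((p - 1)/p) * (a powr p / (p * X) + (p - 1) * b powr p / (p * Y))"
proof -
  have "a * b powr (p - 1) = X powr (1/p) * Y powr ((p - 1)/p) * ((a powr p / X) powr (1/p) * (b powr p / Y) powr ((p - 1)/p))"
    using assms by (simp add: powr_divide powr_powr)
  also have "\<dots> \<le> X powr (1/p) * Y powr ((p - 1)/p) * (1/p * (a powr p / X) + (p - 1)/p * (b powr p / Y))"
    using assms by (intro mult_left_mono weighted_AM_GM) (auto simp: field_simps)
  also have "\<dots> = X powr (1/p) * Y powr ((p - 1)/p) * (a powr p / (p * X) + (p - 1) * b powr p / (p * Y))"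
    by (simp add: field_simps)
  finally show ?thesis .
qed

lemma Holder_inequality_powr:
  fixes f g :: "'x \<Rightarrow> real"
  assumes p: "1 \<le> p"
    and [measurable]: "f \<in> borel_measurable M" "g \<in> borel_measurable M"
    and nonneg: "\<And>x. 0 \<le> f x" "\<And>x. 0 \<le> g x"
    and fi: "integrable M (\<lambda>x. f x powr p)" and gi: "integrable M (\<lambda>x. g x powr p)"
  shows "(\<integral>\<^sup>+x. ennreal (f x * g x powr (p - 1)) \<partial>M)
     \<le> ennreal ((\<integral>x. f x powr p \<partial>M) powr (1/p) * (\<integral>x. g x powr p \<partial>M) powr ((p - 1)/p))"
proof -
  define X where "X = (\<integral>x. f x powr p \<partial>M)"
  define Y where "Y = (\<integral>x. g x powr p \<partial>M)"
  have "0 \<le> X" "0 \<le> Y"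
    unfolding X_def Y_def by (auto intro!: integral_nonneg_AE)
  then consider "X = 0 \<or> Y = 0" | "0 < X" "0 < Y"
    by fastforce
  then show ?thesis
  proof cases
    case 1
    then have "(AE x in M. f x powr p = 0) \<or> (AE x in M. g x powr p = 0)"
      using integral_nonneg_eq_0_iff_AE[OF fi] integral_nonneg_eq_0_iff_AE[OF gi]
      by (auto simp: X_def Y_def)
    then have "AE x in M. f x = 0 \<or> g x = 0"
      by (auto elim!: eventually_mono)
    then have "AE x in M. ennreal (f x * g x powr (p - 1)) = 0"
      by eventually_elim auto
    then have "(\<integral>\<^sup>+x. ennreal (f x * g x powr (p - 1)) \<partial>M) = 0"
      by (simp add: nn_integral_cong_AE)
    then show ?thesis
      by simp
  next
    case 2
    define K where "K = X powr (1/p) * Y powr ((p - 1)/p)"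
    have "(\<integral>\<^sup>+x. ennreal (f x * g x powr (p - 1)) \<partial>M)
        \<le> (\<integral>\<^sup>+x. ennreal (K * (f x powr p / (p * X) + (p - 1) * g x powr p / (p * Y))) \<partial>M)"
      unfolding K_def using 2 p nonneg
      by (intro nn_integral_mono ennreal_leI scaled_Young_inequality) auto
    also have "\<dots> = ennreal (\<integral>x. K * (f x powr p / (p * X) + (p - 1) * g x powr p / (p * Y)) \<partial>M)"
      using fi gi 2 p by (intro nn_integral_eq_integral) (auto simp: K_def)
    also have "(\<integral>x. K * (f x powr p / (p * X) + (p - 1) * g x powr p / (p * Y)) \<partial>M) = K"
      using fi gi 2 p by (simp add: X_def[symmetric] Y_def[symmetric] field_simps)
    finally show ?thesis
      by (simp add: K_def X_def Y_def)
  qed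
qed

lemma in_Lp_diff:
  assumes "0 \<le> p" "in_Lp D p u" "in_Lp D p v"
  shows "in_Lp D p (\<lambda>x. u x - v x)"
proof -
  have [measurable]: "u \<in> borel_measurable (lebesgue_on D)" "v \<in> borel_measurable (lebesgue_on D)"
    using assms by (auto simp: in_Lp_def)
  have "integrable (lebesgue_on D) (\<lambda>x. 2 powr p * (norm (u x) powr p + norm (v x) powr p))"
    using assms by (auto simp: in_Lp_def)
  then have "integrable (lebesgue_on D) (\<lambda>x. norm (u x - v x) powr p)"
    by (rule Bochner_Integration.integrable_bound) (use norm_diff_powr_le assms(1) in auto)
  then show ?thesis
    by (simp add: in_Lp_def)
qed

lemma integral_norm_diff_powr_le:
  assumes "0 \<le> p" "in_Lp D p u" "in_Lp D p v"
  shows "(\<integral>x. norm (u x - v x) powr p \<partial>lebesgue_on D)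
    \<le> 2 powr p * ((\<integral>x. norm (u x) powr p \<partial>lebesgue_on D) + (\<integral>x. norm (v x) powr p \<partial>lebesgue_on D))"
proof -
  have "(\<integral>x. norm (u x - v x) powr p \<partial>lebesgue_on D)
      \<le> (\<integral>x. 2 powr p * (norm (u x) powr p + norm (v x) powr p) \<partial>lebesgue_on D)"
    using in_Lp_diff[OF assms] assms norm_diff_powr_le
    by (intro integral_mono) (auto simp: in_Lp_def)
  also have "\<dots> = 2 powr p * ((\<integral>x. norm (u x) powr p \<partial>lebesgue_on D) + (\<integral>x. norm (v x) powr p \<partial>lebesgue_on D))"
    using assms by (simp add: in_Lp_def)
  finally show ?thesis .
qed

lemma
  assumes "0 \<le> p" "in_Lp D p u" "in_Lp D p v"
  shows integrable_max_norm_powr: "integrable (lebesgue_on D) (\<lambda>x. max (norm (u x)) (norm (v x)) powr p)"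
    and integral_max_norm_powr_le: "(\<integral>x. max (norm (u x)) (norm (v x)) powr p \<partial>lebesgue_on D)
      \<le> (\<integral>x. norm (u x) powr p \<partial>lebesgue_on D) + (\<integral>x. norm (v x) powr p \<partial>lebesgue_on D)"
proof -
  have [measurable]: "u \<in> borel_measurable (lebesgue_on D)" "v \<in> borel_measurable (lebesgue_on D)"
    and sum: "integrable (lebesgue_on D) (\<lambda>x. norm (u x) powr p + norm (v x) powr p)"
    using assms by (auto simp: in_Lp_def)
  show max: "integrable (lebesgue_on D) (\<lambda>x. max (norm (u x)) (norm (v x)) powr p)"
    by (rule Bochner_Integration.integrable_bound[OF sum]) (use max_powr_le_add assms(1) in auto)
  have "(\<integral>x. max (norm (u x)) (norm (v x)) powr p \<partial>lebesgue_on D)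
      \<le> (\<integral>x. norm (u x) powr p + norm (v x) powr p \<partial>lebesgue_on D)"
    by (rule integral_mono[OF max sum]) (use max_powr_le_add assms(1) in auto)
  then show "(\<integral>x. max (norm (u x)) (norm (v x)) powr p \<partial>lebesgue_on D)
      \<le> (\<integral>x. norm (u x) powr p \<partial>lebesgue_on D) + (\<integral>x. norm (v x) powr p \<partial>lebesgue_on D)"
    using assms by (simp add: in_Lp_def)
qed

lemma Lp_norm_powr:
  assumes "0 < p"
  shows "Lp_norm D p u powr p = (\<integral>x. norm (u x) powr p \<partial>lebesgue_on D)"
proof -
  have "0 \<le> (\<integral>x. norm (u x) powr p \<partial>lebesgue_on D)"
    by (rule integral_nonneg_AE) auto
  then show ?thesis
    using assms by (simp add: Lp_norm_def powr_powr)
qed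

lemma nn_integral_diff_max_powr_le:
  assumes p: "1 \<le> p" and u: "in_Lp D p u" and v: "in_Lp D p v"
    and "(\<integral>t. norm (u t) powr p \<partial>lebesgue_on D) \<le> R" "(\<integral>t. norm (v t) powr p \<partial>lebesgue_on D) \<le> R"
  shows "(\<integral>\<^sup>+t. ennreal (norm (u t - v t) * max (norm (u t)) (norm (v t)) powr (p - 1)) \<partial>lebesgue_on D)
    \<le> ennreal (Lp_norm D p (\<lambda>t. u t - v t) * (2 * R) powr ((p - 1)/p))"
proof -
  have [measurable]: "u \<in> borel_measurable (lebesgue_on D)" "v \<in> borel_measurable (lebesgue_on D)"
    using u v by (auto simp: in_Lp_def)
  have "(\<integral>\<^sup>+t. ennreal (norm (u t - v t) * max (norm (u t)) (norm (v t)) powr (p - 1)) \<partial>lebesgue_on D)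
      \<le> ennreal ((\<integral>t. norm (u t - v t) powr p \<partial>lebesgue_on D) powr (1/p) *
          (\<integral>t. max (norm (u t)) (norm (v t)) powr p \<partial>lebesgue_on D) powr ((p - 1)/p))"
    using p in_Lp_diff[OF _ u v] integrable_max_norm_powr[OF _ u v]
    by (intro Holder_inequality_powr) (auto simp: in_Lp_def le_max_iff_disj)
  also have "\<dots> \<le> ennreal (Lp_norm D p (\<lambda>t. u t - v t) * (2 * R) powr ((p - 1)/p))"
    unfolding Lp_norm_def using assms integral_max_norm_powr_le[OF _ u v]
    by (intro ennreal_leI mult_left_mono powr_mono2 integral_nonneg_AE) auto
  finally show ?thesis .
qed

abbreviation lebesgue_PiM :: "'a::euclidean_space set \<Rightarrow> nat \<Rightarrow> (nat \<Rightarrow> 'a) measure" where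
  "lebesgue_PiM D k \<equiv> PiM {..<k} (\<lambda>_. lebesgue_on D)"

lemma measurable_caratheodory_comp:
  assumes "caratheodory D k g" and u: "u \<in> borel_measurable (lebesgue_on D)"
  shows "(\<lambda>x. g x (\<lambda>i\<in>{..<k}. u (x i))) \<in> borel_measurable (DK D k)"
proof -
  have g: "(\<lambda>(x, \<xi>). g x \<xi>) \<in> borel_measurable (DK D k \<Otimes>\<^sub>M PiM {..<k} (\<lambda>_. borel))"
    using assms by (simp add: caratheodory_def)
  have comp: "(\<lambda>x. u (x i)) \<in> borel_measurable (DK D k)" if "i \<in> {..<k}" for i
    unfolding DK_def
    by (intro measurable_completion measurable_compose[OF measurable_component_singleton[of i] u] that)
  have "(\<lambda>x. (x, \<lambda>i\<in>{..<k}. u (x i))) \<in> DK D k \<rightarrow>\<^sub>M DK D k \<Otimes>\<^sub>M PiM {..<k} (\<lambda>_. borel)"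
    by (intro measurable_Pair measurable_ident_sets refl measurable_restrict comp)
  from measurable_compose[OF this g] show ?thesis
    by simp
qed

lemma AE_PiM_component_sigma_finite:
  assumes "sigma_finite_measure N" "finite I" "i \<in> I" and ae: "AE t in N. P t"
  shows "AE x in PiM I (\<lambda>_. N). P (x i)"
proof -
  interpret product_sigma_finite "\<lambda>_. N"
    by (simp add: product_sigma_finite_def assms)
  from ae obtain Z where Z: "{t\<in>space N. \<not> P t} \<subseteq> Z" "emeasure N Z = 0" "Z \<in> sets N"
    by (rule AE_E)
  show ?thesis
  proof (rule AE_I')
    have sets: "(if j = i then Z else space N) \<in> sets N" for j
      using Z by auto
    have "emeasure (PiM I (\<lambda>_. N)) (PiE I (\<lambda>j. if j = i then Z else space N))
        = (\<Prod>j\<in>I. emeasure N (if j = i then Z else space N))"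
      using sets assms by (intro emeasure_PiM) auto
    also have "\<dots> = 0"
      using Z assms by (auto intro!: prod_zero)
    finally show "PiE I (\<lambda>j. if j = i then Z else space N) \<in> null_sets (PiM I (\<lambda>_. N))"
      using sets assms by (auto intro!: sets_PiM_I_finite)
    show "{x \<in> space (PiM I (\<lambda>_. N)). \<not> P (x i)} \<subseteq> PiE I (\<lambda>j. if j = i then Z else space N)"
      using Z(1) assms by (auto simp: space_PiM PiE_iff extensional_def)
  qed
qed

lemma AE_DK_restrict_comp_eq:
  assumes D: "D \<in> sets lebesgue" and ae: "AE t in lebesgue_on D. u t = v t"
  shows "AE x in DK D k. (\<lambda>i\<in>{..<k}. u (x i)) = (\<lambda>i\<in>{..<k}. v (x i))"
proof -
  have "AE x in lebesgue_PiM D k. u (x i) = v (x i)" if "i < k" for i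
    using AE_PiM_component_sigma_finite[OF sigma_finite_lebesgue_on[OF D] _ _ ae, of "{..<k}" i] that
    by simp
  then have "AE x in lebesgue_PiM D k. \<forall>i\<in>{..<k}. u (x i) = v (x i)"
    by (subst AE_finite_all) auto
  then show ?thesis
    unfolding DK_def by (intro AE_completion) (auto elim!: eventually_mono)
qed

lemma Lg_cong_AE:
  assumes "D \<in> sets lebesgue" "caratheodory D k g"
    and "u \<in> borel_measurable (lebesgue_on D)" "v \<in> borel_measurable (lebesgue_on D)"
    and "AE t in lebesgue_on D. u t = v t"
  shows "Lg D k g u = Lg D k g v"
  unfolding Lg_def
proof (rule integral_cong_AE)
  show "AE x in DK D k. g x (\<lambda>i\<in>{..<k}. u (x i)) = g x (\<lambda>i\<in>{..<k}. v (x i))"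
    using AE_DK_restrict_comp_eq[OF assms(1,5)] by eventually_elim simp
qed (use measurable_caratheodory_comp[OF assms(2)] assms(3,4) in blast)+

lemma card_Diff_lessThan_le: "card ({..<k} - A) \<le> k"
  by (metis card_lessThan card_mono Diff_subset finite_lessThan)

lemma Hkp_borel_growth_bound:
  fixes g :: "(nat \<Rightarrow> 'a::euclidean_space) \<Rightarrow> (nat \<Rightarrow> 'b::euclidean_space) \<Rightarrow> real"
  assumes "Hkp D k p g"
  obtains \<psi> :: "nat \<Rightarrow> (nat \<Rightarrow> 'a) \<Rightarrow> ennreal" and c :: "nat \<Rightarrow> real"
  where "\<And>j. j \<le> k \<Longrightarrow> \<psi> j \<in> borel_measurable (lebesgue_PiM D j)"
    and "\<And>j. j \<le> k \<Longrightarrow> (\<integral>\<^sup>+y. \<psi> j y \<partial>lebesgue_PiM D j) = ennreal (c j)"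
    and "\<And>j. 0 \<le> c j"
    and "\<And>x u. x \<in> PiE {..<k} (\<lambda>_. D) \<Longrightarrow> ennreal \<bar>g x (\<lambda>i\<in>{..<k}. u (x i))\<bar>
      \<le> (\<Sum>A\<in>Pow {..<k}. \<psi> (card ({..<k} - A)) (subvec x ({..<k} - A)) * (\<Prod>i\<in>A. ennreal (norm (u (x i)) powr p)))"
proof -
  obtain \<phi> :: "nat \<Rightarrow> (nat \<Rightarrow> 'a) \<Rightarrow> real" where
    \<phi>: "\<forall>j\<le>k. (\<forall>x. 0 \<le> \<phi> j x) \<and> integrable (DK D j) (\<phi> j)" and
    growth: "\<forall>x \<in> PiE {..<k} (\<lambda>_. D). \<forall>\<xi> \<in> PiE {..<k} (\<lambda>_. UNIV).
      \<bar>g x \<xi>\<bar> \<le> (\<Sum>A\<in>Pow {..<k}. \<phi> (card ({..<k} - A)) (subvec x ({..<k} - A)) * (\<Prod>i\<in>A. norm (\<xi> i)) powr p)"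
    using assms unfolding Hkp_def by blast
  have "\<exists>\<psi>. j \<le> k \<longrightarrow> \<psi> \<in> borel_measurable (lebesgue_PiM D j) \<and>
      (\<forall>x\<in>space (lebesgue_PiM D j). ennreal (\<phi> j x) \<le> \<psi> x) \<and>
      (\<integral>\<^sup>+y. \<psi> y \<partial>lebesgue_PiM D j) = ennreal (integral\<^sup>L (DK D j) (\<phi> j))" for j
  proof (cases "j \<le> k")
    case True
    then have "integrable (completion (lebesgue_PiM D j)) (\<phi> j)" "\<And>x. 0 \<le> \<phi> j x"
      using \<phi> by (auto simp: DK_def)
    then show ?thesis
      by (auto simp: DK_def elim!: completion_integrable_borel_majorant)
  qed simp
  then obtain \<psi> where \<psi>_meas: "\<And>j. j \<le> k \<Longrightarrow> \<psi> j \<in> borel_measurable (lebesgue_PiM D j)"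
    and \<psi>_ge: "\<And>j x. j \<le> k \<Longrightarrow> x \<in> space (lebesgue_PiM D j) \<Longrightarrow> ennreal (\<phi> j x) \<le> \<psi> j x"
    and \<psi>_int: "\<And>j. j \<le> k \<Longrightarrow> (\<integral>\<^sup>+y. \<psi> j y \<partial>lebesgue_PiM D j) = ennreal (integral\<^sup>L (DK D j) (\<phi> j))"
    by metis
  show ?thesis
  proof (rule that[of \<psi> "\<lambda>j. enn2real (\<integral>\<^sup>+y. \<psi> j y \<partial>lebesgue_PiM D j)"])
    fix x and u :: "'a \<Rightarrow> 'b" assume x: "x \<in> PiE {..<k} (\<lambda>_. D)"
    have "ennreal \<bar>g x (\<lambda>i\<in>{..<k}. u (x i))\<bar> \<le> ennreal (\<Sum>A\<in>Pow {..<k}.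
        \<phi> (card ({..<k} - A)) (subvec x ({..<k} - A)) * (\<Prod>i\<in>A. norm ((\<lambda>i\<in>{..<k}. u (x i)) i)) powr p)"
      using growth[rule_format, OF x, of "\<lambda>i\<in>{..<k}. u (x i)"] by (intro ennreal_leI) simp
    also have "\<dots> = (\<Sum>A\<in>Pow {..<k}.
        ennreal (\<phi> (card ({..<k} - A)) (subvec x ({..<k} - A)) * (\<Prod>i\<in>A. norm ((\<lambda>i\<in>{..<k}. u (x i)) i)) powr p))"
      by (rule sum_ennreal[symmetric]) (use \<phi> card_Diff_lessThan_le in auto)
    also have "\<dots> \<le> (\<Sum>A\<in>Pow {..<k}. \<psi> (card ({..<k} - A)) (subvec x ({..<k} - A)) * (\<Prod>i\<in>A. ennreal (norm (u (x i)) powr p)))"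
    proof (intro sum_mono)
      fix A assume A: "A \<in> Pow {..<k}"
      then have "subvec x ({..<k} - A) \<in> space (lebesgue_PiM D (card ({..<k} - A)))"
        using subvec_in_PiE[OF _ _ x] by (simp add: space_PiM)
      moreover have "(\<Prod>i\<in>A. norm ((\<lambda>i\<in>{..<k}. u (x i)) i)) powr p = (\<Prod>i\<in>A. norm (u (x i)) powr p)"
        using A by (auto simp: prod_powr_distrib subset_iff intro!: prod.cong)
      ultimately show "ennreal (\<phi> (card ({..<k} - A)) (subvec x ({..<k} - A)) * (\<Prod>i\<in>A. norm ((\<lambda>i\<in>{..<k}. u (x i)) i)) powr p)
          \<le> \<psi> (card ({..<k} - A)) (subvec x ({..<k} - A)) * (\<Prod>i\<in>A. ennreal (norm (u (x i)) powr p))"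
        using \<phi> card_Diff_lessThan_le
        by (simp add: ennreal_mult prod_nonneg prod_ennreal) (intro mult_right_mono \<psi>_ge card_Diff_lessThan_le; simp)
    qed
    finally show "ennreal \<bar>g x (\<lambda>i\<in>{..<k}. u (x i))\<bar> \<le> \<dots>" .
  qed (use \<psi>_meas \<psi>_int in auto)
qed

lemma Hkp_comp_majorant:
  fixes g :: "(nat \<Rightarrow> 'a::euclidean_space) \<Rightarrow> (nat \<Rightarrow> 'b::euclidean_space) \<Rightarrow> real"
  assumes D: "D \<in> sets lebesgue" and "Hkp D k p g"
  obtains C :: "real \<Rightarrow> real" where "\<And>R. 0 \<le> C R"
    "\<And>u R. in_Lp D p u \<Longrightarrow> (\<integral>t. norm (u t) powr p \<partial>lebesgue_on D) \<le> R \<Longrightarrow>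
      \<exists>G \<in> borel_measurable (lebesgue_PiM D k).
        (\<forall>x \<in> PiE {..<k} (\<lambda>_. D). ennreal \<bar>g x (\<lambda>i\<in>{..<k}. u (x i))\<bar> \<le> G x) \<and>
        (\<integral>\<^sup>+x. G x \<partial>lebesgue_PiM D k) \<le> ennreal (C R)"
proof -
  obtain \<psi> c where \<psi>_meas: "\<And>j. j \<le> k \<Longrightarrow> \<psi> j \<in> borel_measurable (lebesgue_PiM D j)"
    and \<psi>_int: "\<And>j. j \<le> k \<Longrightarrow> (\<integral>\<^sup>+y. \<psi> j y \<partial>lebesgue_PiM D j) = ennreal (c j)"
    and c_nonneg: "\<And>j. 0 \<le> c j"
    and growth: "\<And>x (u :: 'a \<Rightarrow> 'b). x \<in> PiE {..<k} (\<lambda>_. D) \<Longrightarrow> ennreal \<bar>g x (\<lambda>i\<in>{..<k}. u (x i))\<bar>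
      \<le> (\<Sum>A\<in>Pow {..<k}. \<psi> (card ({..<k} - A)) (subvec x ({..<k} - A)) * (\<Prod>i\<in>A. ennreal (norm (u (x i)) powr p)))"
    by (rule Hkp_borel_growth_bound[OF assms(2)]) (rule that)
  have N: "sigma_finite_measure (lebesgue_on D)"
    using D by (rule sigma_finite_lebesgue_on)
  show ?thesis
  proof (rule that[of "\<lambda>R. \<Sum>A\<in>Pow {..<k}. c (card ({..<k} - A)) * max R 0 ^ card A"])
    show "0 \<le> (\<Sum>A\<in>Pow {..<k}. c (card ({..<k} - A)) * max R 0 ^ card A)" for R
      using c_nonneg by (intro sum_nonneg) auto
  next
    fix u :: "'a \<Rightarrow> 'b" and R
    assume u: "in_Lp D p u" and R: "(\<integral>t. norm (u t) powr p \<partial>lebesgue_on D) \<le> R"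
    define J where "J = (\<integral>t. norm (u t) powr p \<partial>lebesgue_on D)"
    have J: "0 \<le> J" "J \<le> max R 0"
      using R by (auto simp: J_def intro!: integral_nonneg_AE)
    define w where "w t = ennreal (norm (u t) powr p)" for t
    have [measurable]: "u \<in> borel_measurable (lebesgue_on D)"
      using u by (simp add: in_Lp_def)
    have w_meas: "w \<in> borel_measurable (lebesgue_on D)"
      unfolding w_def by measurable
    have w_int: "(\<integral>\<^sup>+t. w t \<partial>lebesgue_on D) = ennreal J"
      using u by (simp add: w_def J_def in_Lp_def nn_integral_eq_integral)
    define G where
      "G x = (\<Sum>A\<in>Pow {..<k}. \<psi> (card ({..<k} - A)) (subvec x ({..<k} - A)) * (\<Prod>i\<in>A. w (x i)))" for x
    have term_meas: "(\<lambda>x. \<psi> (card ({..<k} - A)) (subvec x ({..<k} - A)) * (\<Prod>i\<in>A. w (x i)))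
        \<in> borel_measurable (lebesgue_PiM D k)" if "A \<in> Pow {..<k}" for A
      using that by (intro measurable_subvec_mult_prod \<psi>_meas card_Diff_lessThan_le w_meas) auto
    have "(\<integral>\<^sup>+x. G x \<partial>lebesgue_PiM D k) = (\<Sum>A\<in>Pow {..<k}. ennreal (c (card ({..<k} - A)) * J ^ card A))"
      unfolding G_def using J c_nonneg
      by (subst nn_integral_sum) (auto intro: term_meas simp: nn_integral_PiM_subvec_prod[OF N]
          \<psi>_meas \<psi>_int w_meas w_int card_Diff_lessThan_le ennreal_mult ennreal_power)
    also have "\<dots> \<le> ennreal (\<Sum>A\<in>Pow {..<k}. c (card ({..<k} - A)) * max R 0 ^ card A)"
      using J c_nonneg by (auto intro!: ennreal_leI sum_mono mult_left_mono power_mono)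
    finally have "(\<integral>\<^sup>+x. G x \<partial>lebesgue_PiM D k) \<le> \<dots>" .
    moreover have "G \<in> borel_measurable (lebesgue_PiM D k)"
      unfolding G_def by (intro borel_measurable_sum term_meas)
    moreover have "\<forall>x \<in> PiE {..<k} (\<lambda>_. D). ennreal \<bar>g x (\<lambda>i\<in>{..<k}. u (x i))\<bar> \<le> G x"
      using growth by (simp add: G_def w_def)
    ultimately show "\<exists>G \<in> borel_measurable (lebesgue_PiM D k).
        (\<forall>x \<in> PiE {..<k} (\<lambda>_. D). ennreal \<bar>g x (\<lambda>i\<in>{..<k}. u (x i))\<bar> \<le> G x) \<and>
        (\<integral>\<^sup>+x. G x \<partial>lebesgue_PiM D k) \<le> ennreal (\<Sum>A\<in>Pow {..<k}. c (card ({..<k} - A)) * max R 0 ^ card A)"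
      by blast
  qed
qed

lemma integrable_Hkp_comp:
  fixes g :: "(nat \<Rightarrow> 'a::euclidean_space) \<Rightarrow> (nat \<Rightarrow> 'b::euclidean_space) \<Rightarrow> real"
  assumes D: "D \<in> sets lebesgue" and H: "Hkp D k p g" and u: "in_Lp D p u"
  shows "integrable (DK D k) (\<lambda>x. g x (\<lambda>i\<in>{..<k}. u (x i)))"
proof (rule integrableI_bounded)
  show "(\<lambda>x. g x (\<lambda>i\<in>{..<k}. u (x i))) \<in> borel_measurable (DK D k)"
    using H u by (intro measurable_caratheodory_comp) (auto simp: Hkp_def in_Lp_def)
  obtain C where "\<And>R. 0 \<le> C R" "\<And>(u :: 'a \<Rightarrow> 'b) R. in_Lp D p u \<Longrightarrow> (\<integral>t. norm (u t) powr p \<partial>lebesgue_on D) \<le> R \<Longrightarrow>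
      \<exists>G \<in> borel_measurable (lebesgue_PiM D k).
        (\<forall>x \<in> PiE {..<k} (\<lambda>_. D). ennreal \<bar>g x (\<lambda>i\<in>{..<k}. u (x i))\<bar> \<le> G x) \<and>
        (\<integral>\<^sup>+x. G x \<partial>lebesgue_PiM D k) \<le> ennreal (C R)"
    by (rule Hkp_comp_majorant[OF D H]) (rule that)
  from this(2)[OF u order.refl] obtain G
    where G: "\<forall>x \<in> PiE {..<k} (\<lambda>_. D). ennreal \<bar>g x (\<lambda>i\<in>{..<k}. u (x i))\<bar> \<le> G x"
      "(\<integral>\<^sup>+x. G x \<partial>lebesgue_PiM D k) \<le> ennreal (C (\<integral>t. norm (u t) powr p \<partial>lebesgue_on D))"
    by blast
  have "(\<integral>\<^sup>+x. ennreal (norm (g x (\<lambda>i\<in>{..<k}. u (x i)))) \<partial>DK D k)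
      = (\<integral>\<^sup>+x. ennreal (norm (g x (\<lambda>i\<in>{..<k}. u (x i)))) \<partial>lebesgue_PiM D k)"
    by (simp add: DK_def nn_integral_completion)
  also have "\<dots> \<le> (\<integral>\<^sup>+x. G x \<partial>lebesgue_PiM D k)"
    using G(1) by (intro nn_integral_mono) (auto simp: space_PiM)
  also have "\<dots> < \<infinity>"
    using G(2) by (simp add: order.strict_trans1)
  finally show "(\<integral>\<^sup>+x. ennreal (norm (g x (\<lambda>i\<in>{..<k}. u (x i)))) \<partial>DK D k) < \<infinity>" .
qed

lemma Hkp1_diagonal_bound:
  fixes g :: "(nat \<Rightarrow> 'a::euclidean_space) \<Rightarrow> (nat \<Rightarrow> 'b::euclidean_space) \<Rightarrow> real"
  assumes "Hkp1 D k p g"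
  obtains h :: "(nat \<Rightarrow> 'a) \<Rightarrow> (nat \<Rightarrow> 'b) \<Rightarrow> real"
  where "Hkp D (k - 1) p h" "\<And>x \<xi>. 0 \<le> h x \<xi>"
    "\<And>x u v. x \<in> PiE {..<k} (\<lambda>_. D) \<Longrightarrow>
       \<bar>g x (\<lambda>i\<in>{..<k}. u (x i)) - g x (\<lambda>i\<in>{..<k}. v (x i))\<bar>
       \<le> (\<Sum>i<k. norm (u (x i) - v (x i)) * max (norm (u (x i))) (norm (v (x i))) powr (p - 1)
            * h (subvec x ({..<k} - {i})) (\<lambda>j\<in>{..<k - 1}. v (subvec x ({..<k} - {i}) j)))"
proof -
  obtain r h where r: "r > 0" and h: "Hkp D (k - 1) p h" "\<forall>x \<xi>. 0 \<le> h x \<xi>"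
    and lip: "\<forall>x \<in> PiE {..<k} (\<lambda>_. D). \<forall>y \<in> PiE {..<k} (\<lambda>_. D).
           (\<Sum>i<k. (norm (x i - y i))\<^sup>2) < r\<^sup>2 \<longrightarrow>
           (\<forall>\<xi> \<in> PiE {..<k} (\<lambda>_. UNIV). \<forall>\<zeta> \<in> PiE {..<k} (\<lambda>_. UNIV).
              \<bar>g x \<zeta> - g y \<xi>\<bar> \<le> (\<Sum>i<k. norm (\<zeta> i - \<xi> i) * (max (norm (\<xi> i)) (norm (\<zeta> i))) powr (p - 1)
                    * h (subvec x ({..<k} - {i})) (subvec \<xi> ({..<k} - {i}))))"
    using assms unfolding Hkp1_def by blast
  show ?thesis
  proof (rule that[OF h(1)])
    fix x and u v :: "'a \<Rightarrow> 'b" assume x: "x \<in> PiE {..<k} (\<lambda>_. D)"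
    have "(\<Sum>i<k. (norm (x i - x i))\<^sup>2) < r\<^sup>2"
      using r by simp
    then have "\<forall>\<xi> \<in> PiE {..<k} (\<lambda>_. UNIV). \<forall>\<zeta> \<in> PiE {..<k} (\<lambda>_. UNIV).
        \<bar>g x \<zeta> - g x \<xi>\<bar> \<le> (\<Sum>i<k. norm (\<zeta> i - \<xi> i) * (max (norm (\<xi> i)) (norm (\<zeta> i))) powr (p - 1)
          * h (subvec x ({..<k} - {i})) (subvec \<xi> ({..<k} - {i})))"
      using lip x by blast
    from this[rule_format, of "\<lambda>i\<in>{..<k}. v (x i)" "\<lambda>i\<in>{..<k}. u (x i)"]
    have "\<bar>g x (\<lambda>i\<in>{..<k}. u (x i)) - g x (\<lambda>i\<in>{..<k}. v (x i))\<bar>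
        \<le> (\<Sum>i<k. norm (u (x i) - v (x i)) * max (norm (v (x i))) (norm (u (x i))) powr (p - 1)
            * h (subvec x ({..<k} - {i})) (subvec (\<lambda>i\<in>{..<k}. v (x i)) ({..<k} - {i})))"
      by simp
    then show "\<bar>g x (\<lambda>i\<in>{..<k}. u (x i)) - g x (\<lambda>i\<in>{..<k}. v (x i))\<bar>
       \<le> (\<Sum>i<k. norm (u (x i) - v (x i)) * max (norm (u (x i))) (norm (v (x i))) powr (p - 1)
            * h (subvec x ({..<k} - {i})) (\<lambda>j\<in>{..<k - 1}. v (subvec x ({..<k} - {i}) j)))"
      by (simp add: subvec_restrict_comp max.commute)
  qed (use h(2) in auto)
qed

lemma abs_Lg_diff_le_nn_integral:
  fixes g :: "(nat \<Rightarrow> 'a::euclidean_space) \<Rightarrow> (nat \<Rightarrow> 'b::euclidean_space) \<Rightarrow> real"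
  assumes D: "D \<in> sets lebesgue" and H: "Hkp D k p g" and u: "in_Lp D p u" and v: "in_Lp D p v"
  shows "ennreal \<bar>Lg D k g u - Lg D k g v\<bar>
    \<le> (\<integral>\<^sup>+x. ennreal \<bar>g x (\<lambda>i\<in>{..<k}. u (x i)) - g x (\<lambda>i\<in>{..<k}. v (x i))\<bar> \<partial>lebesgue_PiM D k)"
proof -
  have "ennreal \<bar>Lg D k g u - Lg D k g v\<bar>
      \<le> (\<integral>\<^sup>+x. ennreal \<bar>g x (\<lambda>i\<in>{..<k}. u (x i)) - g x (\<lambda>i\<in>{..<k}. v (x i))\<bar> \<partial>DK D k)"
    using integral_norm_bound_ennreal[of "DK D k" "\<lambda>x. g x (\<lambda>i\<in>{..<k}. u (x i)) - g x (\<lambda>i\<in>{..<k}. v (x i))"]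
      integrable_Hkp_comp[OF D H u] integrable_Hkp_comp[OF D H v]
    by (simp add: Lg_def)
  then show ?thesis
    by (simp add: DK_def nn_integral_completion)
qed

lemma nn_integral_diagonal_bound_le:
  fixes g h :: "(nat \<Rightarrow> 'a::euclidean_space) \<Rightarrow> (nat \<Rightarrow> 'b::euclidean_space) \<Rightarrow> real"
  assumes D: "D \<in> sets lebesgue"
    and [measurable]: "u \<in> borel_measurable (lebesgue_on D)" "v \<in> borel_measurable (lebesgue_on D)"
    and h_nonneg: "\<And>x \<xi>. 0 \<le> h x \<xi>"
    and diag: "\<And>x. x \<in> PiE {..<k} (\<lambda>_. D) \<Longrightarrow>
       \<bar>g x (\<lambda>i\<in>{..<k}. u (x i)) - g x (\<lambda>i\<in>{..<k}. v (x i))\<bar>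
       \<le> (\<Sum>i<k. norm (u (x i) - v (x i)) * max (norm (u (x i))) (norm (v (x i))) powr (p - 1)
            * h (subvec x ({..<k} - {i})) (\<lambda>j\<in>{..<k - 1}. v (subvec x ({..<k} - {i}) j)))"
    and G: "G \<in> borel_measurable (lebesgue_PiM D (k - 1))"
    and G_ge: "\<And>y. y \<in> PiE {..<k - 1} (\<lambda>_. D) \<Longrightarrow> ennreal (h y (\<lambda>j\<in>{..<k - 1}. v (y j))) \<le> G y"
  shows "(\<integral>\<^sup>+x. ennreal \<bar>g x (\<lambda>i\<in>{..<k}. u (x i)) - g x (\<lambda>i\<in>{..<k}. v (x i))\<bar> \<partial>lebesgue_PiM D k)
    \<le> of_nat k * ((\<integral>\<^sup>+t. ennreal (norm (u t - v t) * max (norm (u t)) (norm (v t)) powr (p - 1)) \<partial>lebesgue_on D)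
        * (\<integral>\<^sup>+y. G y \<partial>lebesgue_PiM D (k - 1)))"
proof -
  define a where "a t = ennreal (norm (u t - v t) * max (norm (u t)) (norm (v t)) powr (p - 1))" for t
  have a: "a \<in> borel_measurable (lebesgue_on D)"
    unfolding a_def by measurable
  have "ennreal \<bar>g x (\<lambda>i\<in>{..<k}. u (x i)) - g x (\<lambda>i\<in>{..<k}. v (x i))\<bar>
      \<le> (\<Sum>i<k. a (x i) * G (subvec x ({..<k} - {i})))" if x: "x \<in> PiE {..<k} (\<lambda>_. D)" for x
  proof -
    have "ennreal (norm (u (x i) - v (x i)) * max (norm (u (x i))) (norm (v (x i))) powr (p - 1)
          * h (subvec x ({..<k} - {i})) (\<lambda>j\<in>{..<k - 1}. v (subvec x ({..<k} - {i}) j)))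
        \<le> a (x i) * G (subvec x ({..<k} - {i}))" if i: "i < k" for i
    proof -
      have "subvec x ({..<k} - {i}) \<in> PiE {..<k - 1} (\<lambda>_. D)"
        using subvec_in_PiE[of "{..<k} - {i}" "{..<k}" x] x i by simp
      then show ?thesis
        using G_ge h_nonneg by (auto simp: a_def ennreal_mult intro!: mult_left_mono)
    qed
    moreover have "ennreal \<bar>g x (\<lambda>i\<in>{..<k}. u (x i)) - g x (\<lambda>i\<in>{..<k}. v (x i))\<bar>
      \<le> (\<Sum>i<k. ennreal (norm (u (x i) - v (x i)) * max (norm (u (x i))) (norm (v (x i))) powr (p - 1)
          * h (subvec x ({..<k} - {i})) (\<lambda>j\<in>{..<k - 1}. v (subvec x ({..<k} - {i}) j))))"
      using diag[OF x] h_nonneg by (simp add: ennreal_leI)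
    ultimately show ?thesis
      by (meson lessThan_iff order.trans sum_mono)
  qed
  then have "(\<integral>\<^sup>+x. ennreal \<bar>g x (\<lambda>i\<in>{..<k}. u (x i)) - g x (\<lambda>i\<in>{..<k}. v (x i))\<bar> \<partial>lebesgue_PiM D k)
      \<le> (\<integral>\<^sup>+x. (\<Sum>i<k. a (x i) * G (subvec x ({..<k} - {i}))) \<partial>lebesgue_PiM D k)"
    by (intro nn_integral_mono) (auto simp: space_PiM)
  also have "\<dots> = of_nat k * ((\<integral>\<^sup>+t. a t \<partial>lebesgue_on D) * (\<integral>\<^sup>+y. G y \<partial>lebesgue_PiM D (k - 1)))"
    by (intro nn_integral_PiM_sum_component_mult sigma_finite_lebesgue_on D a G)
  finally show ?thesis
    by (simp add: a_def)
qed

lemma Hkp1_Lipschitz_on_bounded_sets: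
  fixes g :: "(nat \<Rightarrow> 'a::euclidean_space) \<Rightarrow> (nat \<Rightarrow> 'b::euclidean_space) \<Rightarrow> real"
  assumes D: "D \<in> sets lebesgue" and p: "1 \<le> p" and H1: "Hkp1 D k p g"
  obtains K :: "real \<Rightarrow> real" where
    "\<And>R u v. in_Lp D p u \<Longrightarrow> in_Lp D p v \<Longrightarrow>
      (\<integral>t. norm (u t) powr p \<partial>lebesgue_on D) \<le> R \<Longrightarrow> (\<integral>t. norm (v t) powr p \<partial>lebesgue_on D) \<le> R \<Longrightarrow>
      \<bar>Lg D k g u - Lg D k g v\<bar> \<le> K R * Lp_norm D p (\<lambda>x. u x - v x)"
proof -
  obtain h :: "(nat \<Rightarrow> 'a) \<Rightarrow> (nat \<Rightarrow> 'b) \<Rightarrow> real" where h: "Hkp D (k - 1) p h" and h_nonneg: "\<And>x \<xi>. 0 \<le> h x \<xi>"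
    and diag: "\<And>x u v. x \<in> PiE {..<k} (\<lambda>_. D) \<Longrightarrow>
       \<bar>g x (\<lambda>i\<in>{..<k}. u (x i)) - g x (\<lambda>i\<in>{..<k}. v (x i))\<bar>
       \<le> (\<Sum>i<k. norm (u (x i) - v (x i)) * max (norm (u (x i))) (norm (v (x i))) powr (p - 1)
            * h (subvec x ({..<k} - {i})) (\<lambda>j\<in>{..<k - 1}. v (subvec x ({..<k} - {i}) j)))"
    by (rule Hkp1_diagonal_bound[OF H1]) (rule that)
  obtain C where C_nonneg: "\<And>R. 0 \<le> C R" and C: "\<And>(v :: 'a \<Rightarrow> 'b) R. in_Lp D p v \<Longrightarrow>
      (\<integral>t. norm (v t) powr p \<partial>lebesgue_on D) \<le> R \<Longrightarrow>
      \<exists>G \<in> borel_measurable (lebesgue_PiM D (k - 1)).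
        (\<forall>y \<in> PiE {..<k - 1} (\<lambda>_. D). ennreal \<bar>h y (\<lambda>j\<in>{..<k - 1}. v (y j))\<bar> \<le> G y) \<and>
        (\<integral>\<^sup>+y. G y \<partial>lebesgue_PiM D (k - 1)) \<le> ennreal (C R)"
    by (rule Hkp_comp_majorant[OF D h]) (rule that)
  show ?thesis
  proof (rule that[of "\<lambda>R. real k * (2 * R) powr ((p - 1)/p) * C R"])
    fix R and u v :: "'a \<Rightarrow> 'b"
    assume u: "in_Lp D p u" and v: "in_Lp D p v"
      and Ju: "(\<integral>t. norm (u t) powr p \<partial>lebesgue_on D) \<le> R"
      and Jv: "(\<integral>t. norm (v t) powr p \<partial>lebesgue_on D) \<le> R"
    obtain G where G: "G \<in> borel_measurable (lebesgue_PiM D (k - 1))"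
      and G_ge: "\<forall>y \<in> PiE {..<k - 1} (\<lambda>_. D). ennreal \<bar>h y (\<lambda>j\<in>{..<k - 1}. v (y j))\<bar> \<le> G y"
      and G_int: "(\<integral>\<^sup>+y. G y \<partial>lebesgue_PiM D (k - 1)) \<le> ennreal (C R)"
      using C[OF v Jv] by blast
    define L where "L = Lp_norm D p (\<lambda>x. u x - v x)"
    define M where "M = (2 * R) powr ((p - 1)/p)"
    have L: "0 \<le> L"
      by (simp add: L_def Lp_norm_def)
    have "ennreal \<bar>Lg D k g u - Lg D k g v\<bar>
        \<le> (\<integral>\<^sup>+x. ennreal \<bar>g x (\<lambda>i\<in>{..<k}. u (x i)) - g x (\<lambda>i\<in>{..<k}. v (x i))\<bar> \<partial>lebesgue_PiM D k)"
      using H1 by (intro abs_Lg_diff_le_nn_integral[OF D _ u v]) (simp add: Hkp1_def)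
    also have "\<dots> \<le> of_nat k * ((\<integral>\<^sup>+t. ennreal (norm (u t - v t) * max (norm (u t)) (norm (v t)) powr (p - 1)) \<partial>lebesgue_on D)
        * (\<integral>\<^sup>+y. G y \<partial>lebesgue_PiM D (k - 1)))"
      by (rule nn_integral_diagonal_bound_le[where g = g and h = h and u = u and v = v and G = G])
         (use D u v h_nonneg diag G G_ge in \<open>auto simp: in_Lp_def\<close>)
    also have "\<dots> \<le> of_nat k * (ennreal (L * M) * ennreal (C R))"
      using nn_integral_diff_max_powr_le[OF p u v Ju Jv] G_int
      by (intro mult_left_mono mult_mono) (auto simp: L_def M_def)
    also have "\<dots> = ennreal (real k * M * C R * L)"
      using L C_nonneg by (simp add: M_def ennreal_mult' ennreal_of_nat_eq_real_of_nat mult_ac)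
    finally show "\<bar>Lg D k g u - Lg D k g v\<bar> \<le> real k * (2 * R) powr ((p - 1)/p) * C R * Lp_norm D p (\<lambda>x. u x - v x)"
      using L C_nonneg by (simp add: M_def L_def ennreal_le_iff)
  qed
qed

lemma Hkp1_Lipschitz_on_Lp_balls:
  fixes g :: "(nat \<Rightarrow> 'a::euclidean_space) \<Rightarrow> (nat \<Rightarrow> 'b::euclidean_space) \<Rightarrow> real"
  assumes "D \<in> sets lebesgue" "1 \<le> p" "Hkp1 D k p g"
  shows "\<exists>C. \<forall>u v. in_Lp D p u \<longrightarrow> in_Lp D p v \<longrightarrow> Lp_norm D p u \<le> R \<longrightarrow> Lp_norm D p v \<le> R \<longrightarrow>
    \<bar>Lg D k g u - Lg D k g v\<bar> \<le> C * Lp_norm D p (\<lambda>x. u x - v x)"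
proof -
  obtain K where K: "\<And>R u v. in_Lp D p u \<Longrightarrow> in_Lp D p v \<Longrightarrow>
      (\<integral>t. norm (u t) powr p \<partial>lebesgue_on D) \<le> R \<Longrightarrow> (\<integral>t. norm (v t) powr p \<partial>lebesgue_on D) \<le> R \<Longrightarrow>
      \<bar>Lg D k g u - Lg D k g v\<bar> \<le> K R * Lp_norm D p (\<lambda>x. u x - v x)"
    by (rule Hkp1_Lipschitz_on_bounded_sets[OF assms]) (rule that)
  have "(\<integral>t. norm (w t) powr p \<partial>lebesgue_on D) \<le> R powr p" if "Lp_norm D p w \<le> R" for w :: "'a \<Rightarrow> 'b"
  proof -
    have "Lp_norm D p w powr p \<le> R powr p"
      using that assms(2) by (intro powr_mono2) (auto simp: Lp_norm_def)
    then show ?thesis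
      using assms(2) by (simp add: Lp_norm_powr)
  qed
  then show ?thesis
    using K by blast
qed

lemma Hkp1_continuous:
  fixes g :: "(nat \<Rightarrow> 'a::euclidean_space) \<Rightarrow> (nat \<Rightarrow> 'b::euclidean_space) \<Rightarrow> real"
  assumes "D \<in> sets lebesgue" and p: "1 \<le> p" and "Hkp1 D k p g"
    and u: "in_Lp D p u" and e: "e > 0"
  shows "\<exists>\<delta>>0. \<forall>v. in_Lp D p v \<longrightarrow> Lp_norm D p (\<lambda>x. u x - v x) < \<delta> \<longrightarrow> \<bar>Lg D k g u - Lg D k g v\<bar> < e"
proof -
  obtain K where K: "\<And>R u v. in_Lp D p u \<Longrightarrow> in_Lp D p v \<Longrightarrow>
      (\<integral>t. norm (u t) powr p \<partial>lebesgue_on D) \<le> R \<Longrightarrow> (\<integral>t. norm (v t) powr p \<partial>lebesgue_on D) \<le> R \<Longrightarrow>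
      \<bar>Lg D k g u - Lg D k g v\<bar> \<le> K R * Lp_norm D p (\<lambda>x. u x - v x)"
    by (rule Hkp1_Lipschitz_on_bounded_sets[OF assms(1-3)]) (rule that)
  define J where "J w = (\<integral>t. norm (w t) powr p \<partial>lebesgue_on D)" for w :: "'a \<Rightarrow> 'b"
  define R where "R = 2 powr p * (J u + 1)"
  define \<delta> where "\<delta> = min 1 (e / (\<bar>K R\<bar> + 1))"
  have J_nonneg: "0 \<le> J w" for w
    by (auto simp: J_def intro!: integral_nonneg_AE)
  have "J u \<le> R"
    unfolding R_def using J_nonneg[of u] p
    by (smt (verit) ge_one_powr_ge_zero mult_le_cancel_right1)
  show ?thesis
  proof (intro exI[of _ \<delta>] conjI allI impI)
    show "\<delta> > 0"
      using e by (simp add: \<delta>_def)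
    fix v assume v: "in_Lp D p v" and uv: "Lp_norm D p (\<lambda>x. u x - v x) < \<delta>"
    have "Lp_norm D p (\<lambda>x. u x - v x) powr p \<le> 1 powr p"
      using uv p by (intro powr_mono2) (auto simp: \<delta>_def Lp_norm_def)
    then have "J (\<lambda>x. u x - v x) \<le> 1"
      using p by (simp add: J_def Lp_norm_powr)
    moreover have "J v \<le> 2 powr p * (J u + J (\<lambda>x. u x - v x))"
      using integral_norm_diff_powr_le[of p D u "\<lambda>x. u x - v x"] in_Lp_diff[of p D u v] u v p
      by (simp add: J_def)
    ultimately have "J v \<le> R"
      unfolding R_def by (smt (verit) mult_left_mono powr_ge_zero)
    then have "\<bar>Lg D k g u - Lg D k g v\<bar> \<le> K R * Lp_norm D p (\<lambda>x. u x - v x)"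
      using K[OF u v] \<open>J u \<le> R\<close> by (simp add: J_def)
    also have "\<dots> \<le> \<bar>K R\<bar> * Lp_norm D p (\<lambda>x. u x - v x)"
      by (intro mult_right_mono) (auto simp: Lp_norm_def)
    also have "\<dots> \<le> \<bar>K R\<bar> * \<delta>"
      using uv by (intro mult_left_mono) auto
    also have "\<dots> < e"
      using e by (auto simp: \<delta>_def min_def field_simps)
    finally show "\<bar>Lg D k g u - Lg D k g v\<bar> < e" .
  qed
qed

theorem lemma2p4:
  fixes D :: "'a::euclidean_space set" and p :: real
  assumes "open D" and "connected D" and "1 \<le> p"
  shows
    "(\<forall>k (g :: (nat \<Rightarrow> 'a) \<Rightarrow> (nat \<Rightarrow> 'b::euclidean_space) \<Rightarrow> real). Hkp D k p g \<longrightarrow>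
        (\<forall>u. in_Lp D p u \<longrightarrow> integrable (DK D k) (\<lambda>x. g x (\<lambda>i\<in>{..<k}. u (x i)))) \<and>
        (\<forall>u v. in_Lp D p u \<longrightarrow> in_Lp D p v \<longrightarrow> (AE x in lebesgue_on D. u x = v x) \<longrightarrow>
               Lg D k g u = Lg D k g v))
   \<and> (\<forall>k (g :: (nat \<Rightarrow> 'a) \<Rightarrow> (nat \<Rightarrow> 'b) \<Rightarrow> real). Hkp1 D k p g \<longrightarrow>
        (\<forall>u. in_Lp D p u \<longrightarrow> (\<forall>e>0. \<exists>\<delta>>0. \<forall>v. in_Lp D p v \<longrightarrow>
               Lp_norm D p (\<lambda>x. u x - v x) < \<delta> \<longrightarrow> \<bar>Lg D k g u - Lg D k g v\<bar> < e)) \<and>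
        (\<forall>R. \<exists>C. \<forall>u v. in_Lp D p u \<longrightarrow> in_Lp D p v \<longrightarrow> Lp_norm D p u \<le> R \<longrightarrow> Lp_norm D p v \<le> R \<longrightarrow>
               \<bar>Lg D k g u - Lg D k g v\<bar> \<le> C * Lp_norm D p (\<lambda>x. u x - v x)))"
proof -
  have D: "D \<in> sets lebesgue"
    using \<open>open D\<close> by (simp add: borel_open)
  note p = \<open>1 \<le> p\<close>
  show ?thesis
  proof (intro conjI allI impI)
    fix k and g :: "(nat \<Rightarrow> 'a) \<Rightarrow> (nat \<Rightarrow> 'b) \<Rightarrow> real"
    assume H: "Hkp D k p g"
    show "integrable (DK D k) (\<lambda>x. g x (\<lambda>i\<in>{..<k}. u (x i)))" if "in_Lp D p u" for u
      using integrable_Hkp_comp[OF D H that] .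
    show "Lg D k g u = Lg D k g v"
      if "in_Lp D p u" "in_Lp D p v" "AE x in lebesgue_on D. u x = v x" for u v
      using Lg_cong_AE[OF D _ _ _ that(3)] H that(1,2) by (simp add: Hkp_def in_Lp_def)
  next
    fix k and g :: "(nat \<Rightarrow> 'a) \<Rightarrow> (nat \<Rightarrow> 'b) \<Rightarrow> real"
    assume H1: "Hkp1 D k p g"
    show "\<exists>\<delta>>0. \<forall>v. in_Lp D p v \<longrightarrow> Lp_norm D p (\<lambda>x. u x - v x) < \<delta> \<longrightarrow> \<bar>Lg D k g u - Lg D k g v\<bar> < e"
      if "in_Lp D p u" "e > 0" for u e
      using Hkp1_continuous[OF D p H1 that] .
    show "\<exists>C. \<forall>u v. in_Lp D p u \<longrightarrow> in_Lp D p v \<longrightarrow> Lp_norm D p u \<le> R \<longrightarrow> Lp_norm D p v \<le> R \<longrightarrow>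
        \<bar>Lg D k g u - Lg D k g v\<bar> \<le> C * Lp_norm D p (\<lambda>x. u x - v x)" for R
      using Hkp1_Lipschitz_on_Lp_balls[OF D p H1] .
  qed
qed

end
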